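(* Let $\mathbf{u}=(u_1,u_2)$ be a pair of real binary forms of degree $d$. Then there exist real binary forms $g$ of degree $m$, $h$ of degree $k$, and $u_1',u_2'$ of degree $d-m-k$ such that: $(u_1,u_2)=(u_1'gh,\,u_2'gh)$; $\gcd(u_1,u_2)=gh$; $\gcd(u_1',u_2')=1$; $\gcd(u_1'^2+u_2'^2,\,g)=1$; and every (possibly complex) root of $h$ is a root of $u_1'^2+u_2'^2$. Moreover, this decomposition is unique up to multiplication by constants.
   Context: A real binary form of degree $d$ is a homogeneous polynomial of degree $d$ in two variables $x_1,x_2$ with real coefficients. Every binary form factors over $\mathbb{C}$ into linear factors $\prod_i(\alpha_i x_1-\beta_i x_2)$, uniquely up to scalars; a root of a binary form is a point $(\beta_i:\alpha_i)$ (a nonzero complex zero up to scaling). For binary forms, $a$ divides $b$ if $b=wa$ for some binary form $w$; $\gcd(a,b)$ is a common divisor of highest degree (unique up to scalar), and $a,b$ are coprime if $\gcd(a,b)=1$ (a constant). *)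

theory Defs
  imports "HOL-Computational_Algebra.Polynomial" Complex_Main
begin

text \<open>A real binary form of degree d is
  represented by the pair (d, p) with p a real univariate polynomial of degree at most d;
  the form is  F(x1,x2) = sum_{i<=d} coeff p i * x1^i * x2^(d-i).
  Products of forms: (d,p)*(e,q) = (d+e, p*q); sums of forms of equal degree:
  (d,p)+(d,q) = (d,p+q).\<close>

definition is_bform :: "nat \<Rightarrow> real poly \<Rightarrow> bool" where
  "is_bform d p \<longleftrightarrow> degree p \<le> d"

definition bf_eval :: "nat \<Rightarrow> real poly \<Rightarrow> complex \<Rightarrow> complex \<Rightarrow> complex" where
  "bf_eval d p x1 x2 = (\<Sum>i\<le>d. complex_of_real (coeff p i) * x1 ^ i * x2 ^ (d - i))"

definition bf_dvd :: "nat \<Rightarrow> real poly \<Rightarrow> nat \<Rightarrow> real poly \<Rightarrow> bool" where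
  "bf_dvd e q d p \<longleftrightarrow> e \<le> d \<and> (\<exists>w. is_bform (d - e) w \<and> p = w * q)"

definition bf_is_gcd :: "nat \<Rightarrow> real poly \<Rightarrow> nat \<Rightarrow> real poly \<Rightarrow> nat \<Rightarrow> real poly \<Rightarrow> bool" where
  "bf_is_gcd d1 p1 d2 p2 e q \<longleftrightarrow>
     is_bform e q \<and> bf_dvd e q d1 p1 \<and> bf_dvd e q d2 p2 \<and>
     (\<forall>e' q'. is_bform e' q' \<and> bf_dvd e' q' d1 p1 \<and> bf_dvd e' q' d2 p2 \<longrightarrow> e' \<le> e)"

definition bf_coprime :: "nat \<Rightarrow> real poly \<Rightarrow> nat \<Rightarrow> real poly \<Rightarrow> bool" where
  "bf_coprime d1 p1 d2 p2 \<longleftrightarrow> bf_is_gcd d1 p1 d2 p2 0 1"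

text \<open>The decomposition of the pair (u1,u2) of forms of degree d, with g of degree m,
  h of degree k, and v1 = u1', v2 = u2' of degree d - m - k.\<close>
definition bf_decomp :: "nat \<Rightarrow> real poly \<Rightarrow> real poly \<Rightarrow> nat \<Rightarrow> nat \<Rightarrow>
    real poly \<Rightarrow> real poly \<Rightarrow> real poly \<Rightarrow> real poly \<Rightarrow> bool" where
  "bf_decomp d u1 u2 m k g h v1 v2 \<longleftrightarrow>
     m + k \<le> d \<and> is_bform m g \<and> is_bform k h \<and>
     is_bform (d - m - k) v1 \<and> is_bform (d - m - k) v2 \<and>
     u1 = v1 * g * h \<and> u2 = v2 * g * h \<and>
     bf_is_gcd d u1 d u2 (m + k) (g * h) \<and>
     bf_coprime (d - m - k) v1 (d - m - k) v2 \<and>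
     bf_coprime (2 * (d - m - k)) (v1 ^ 2 + v2 ^ 2) m g \<and>
     (\<forall>x1 x2. (x1, x2) \<noteq> (0, 0) \<and> bf_eval k h x1 x2 = 0 \<longrightarrow>
        bf_eval (2 * (d - m - k)) (v1 ^ 2 + v2 ^ 2) x1 x2 = 0)"

end

theory Submission
  imports Defs "HOL-Computational_Algebra.Fundamental_Theorem_Algebra"
    "HOL-Computational_Algebra.Polynomial_Factorial" "HOL-Computational_Algebra.Field_as_Ring"
begin

text \<open>Dehomogenising at \<open>x\<^sub>2 = 1\<close> identifies a real form of degree \<open>d\<close> with a real
  polynomial of degree at most \<open>d\<close>; the form has the extra root \<open>(1:0)\<close> exactly when the
  degree drops, with multiplicity the drop.  So the gcd of two forms is the polynomial gcd
  times the power of \<open>x\<^sub>2\<close> given by the common degree defect.  Dividing it out leaves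
  coprime \<open>u\<^sub>1', u\<^sub>2'\<close>; they do not both vanish at \<open>(1:0)\<close>, hence neither does the sum of
  real squares \<open>s = u\<^sub>1'\<^sup>2 + u\<^sub>2'\<^sup>2\<close>, and the power of \<open>x\<^sub>2\<close> goes into \<open>g\<close>.  The polynomial
  gcd splits as \<open>g h\<close> with \<open>g\<close> coprime to \<open>s\<close> and \<open>h\<close> dividing a power of \<open>s\<close>.
  Uniqueness: the gcd is determined up to a constant, and as all complex roots of \<open>h\<close> are
  roots of \<open>s\<close> while those of \<open>g'\<close> are not, \<open>h\<close> is coprime to \<open>g'\<close> and divides \<open>h'\<close>, and
  symmetrically.\<close>

abbreviation cpoly :: "real poly \<Rightarrow> complex poly" where
  "cpoly \<equiv> map_poly of_real"

lemma cpoly_add: "cpoly (p + q) = cpoly p + cpoly q"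
  by (simp add: poly_eq_iff coeff_map_poly)

lemma cpoly_mult: "cpoly (p * q) = cpoly p * cpoly q"
  by (simp add: poly_eq_iff coeff_map_poly coeff_mult)

lemma cpoly_power: "cpoly (p ^ n) = cpoly p ^ n"
  by (induction n) (simp_all add: cpoly_mult)

lemma cpoly_smult: "cpoly (smult a p) = smult (of_real a) (cpoly p)"
  by (simp add: poly_eq_iff coeff_map_poly)

lemma poly_cpoly_dvd_eq_0:
  assumes "p dvd q" "poly (cpoly p) z = 0"
  shows "poly (cpoly q) z = 0"
  using assms by (auto simp: cpoly_mult elim!: dvdE)

lemma coprime_iff_no_common_complex_root:
  fixes p q :: "real poly"
  shows "coprime p q \<longleftrightarrow> (\<forall>z. poly (cpoly p) z = 0 \<longrightarrow> poly (cpoly q) z \<noteq> 0)"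
proof
  assume "coprime p q"
  then obtain a b where "a * p + b * q = 1"
    using bezout_coefficients_fst_snd by (metis coprime_iff_gcd_eq_1)
  then have "cpoly a * cpoly p + cpoly b * cpoly q = 1"
    by (metis cpoly_add cpoly_mult map_poly_1' of_real_1)
  then show "\<forall>z. poly (cpoly p) z = 0 \<longrightarrow> poly (cpoly q) z \<noteq> 0"
    by (metis mult_zero_right poly_1 poly_add poly_mult zero_neq_one add_0)
next
  assume no_common: "\<forall>z. poly (cpoly p) z = 0 \<longrightarrow> poly (cpoly q) z \<noteq> 0"
  define r where "r = gcd p q"
  have "constant (poly (cpoly r))"
  proof (rule ccontr)
    assume "\<not> constant (poly (cpoly r))"
    then obtain z where "poly (cpoly r) z = 0"
      using fundamental_theorem_of_algebra by blast
    then show False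
      using no_common poly_cpoly_dvd_eq_0 r_def by (metis gcd_dvd1 gcd_dvd2)
  qed
  then have "degree r = 0"
    using constant_degree[of "cpoly r"] by (auto simp: degree_map_poly)
  moreover have "r \<noteq> 0"
    using no_common r_def by auto
  ultimately have "is_unit r"
    using is_unit_iff_degree by blast
  then show "coprime p q"
    using r_def is_unit_gcd by blast
qed

lemma dvd_if_roots_among_coprime:
  fixes h g h' s :: "real poly"
  assumes "h dvd g * h'" "coprime s g" "\<forall>z. poly (cpoly h) z = 0 \<longrightarrow> poly (cpoly s) z = 0"
  shows "h dvd h'"
proof -
  have "coprime h g"
    using assms(2,3) by (simp add: coprime_iff_no_common_complex_root)
  with assms(1) show ?thesis
    by (simp add: coprime_dvd_mult_right_iff)
qed

lemma coprime_split_factor: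
  fixes q s :: "'a::{field,factorial_ring_gcd,semiring_gcd_mult_normalize} poly"
  assumes "q \<noteq> 0"
  shows "\<exists>g h n. q = g * h \<and> coprime g s \<and> h dvd s ^ n"
  using assms
proof (induction "degree q" arbitrary: q rule: less_induct)
  case less
  show ?case
  proof (cases "coprime q s")
    case True
    then show ?thesis by (intro exI[of _ q] exI[of _ 1] exI[of _ 0]) auto
  next
    case False
    define r where "r = gcd q s"
    have "r \<noteq> 0" using less.prems r_def by auto
    moreover have "\<not> is_unit r" using False r_def is_unit_gcd by blast
    ultimately have "degree r > 0"
      using is_unit_iff_degree by blast
    obtain q' where q': "q = r * q'" using r_def by (meson dvd_def gcd_dvd1)
    with less.prems have "q' \<noteq> 0" by auto
    with q' \<open>r \<noteq> 0\<close> \<open>degree r > 0\<close> have "degree q' < degree q"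
      by (simp add: degree_mult_eq)
    then obtain g h n where gh: "q' = g * h" "coprime g s" "h dvd s ^ n"
      using less.hyps \<open>q' \<noteq> 0\<close> by blast
    have "r * h dvd s ^ Suc n"
      using gh(3) r_def by (simp add: mult_dvd_mono)
    moreover have "q = g * (r * h)"
      using q' gh(1) by (simp add: ac_simps)
    ultimately show ?thesis using gh(2) by blast
  qed
qed

lemma dvd_degree_eq_imp_smult:
  fixes p q :: "'a::field poly"
  assumes "p dvd q" "q \<noteq> 0" "degree p = degree q"
  shows "\<exists>c. c \<noteq> 0 \<and> q = smult c p"
proof -
  obtain w where w: "q = p * w" using assms(1) by blast
  with assms(2) have "w \<noteq> 0" "p \<noteq> 0" by auto
  with w assms(3) have "degree w = 0" by (simp add: degree_mult_eq)
  then obtain c where "w = [:c:]" by (meson degree_eq_zeroE)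
  with w \<open>w \<noteq> 0\<close> show ?thesis by (intro exI[of _ c]) auto
qed

lemma dvd_antisym_imp_smult:
  fixes p q :: "'a::field poly"
  assumes "p dvd q" "q dvd p" "q \<noteq> 0"
  shows "\<exists>c. c \<noteq> 0 \<and> q = smult c p"
proof -
  from assms have "p \<noteq> 0" by auto
  with assms have "degree p = degree q"
    by (simp add: dvd_imp_degree_le le_antisym)
  with assms show ?thesis
    using dvd_degree_eq_imp_smult by blast
qed

lemma coeff_power2_double:
  fixes p :: "'a::comm_semiring_1 poly"
  assumes "degree p \<le> n"
  shows "coeff (p ^ 2) (2 * n) = coeff p n ^ 2"
proof (cases "degree p = n")
  case True
  then show ?thesis
    using coeff_mult_degree_sum[of p p] by (simp add: power2_eq_square mult_2)
next
  case False
  have "degree (p ^ 2) \<le> 2 * degree p"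
    by (metis degree_power_le mult.commute)
  with False assms show ?thesis by (simp add: coeff_eq_0)
qed

lemma degree_sum_squares_le:
  fixes p q :: "'a::comm_semiring_1 poly"
  assumes "degree p \<le> n" "degree q \<le> n"
  shows "degree (p ^ 2 + q ^ 2) \<le> 2 * n"
  using degree_power_le[of p 2] degree_power_le[of q 2] degree_add_le assms
  by (metis (no_types, lifting) le_trans mult.commute mult_le_mono1)

lemma bf_eval_dehomogenize:
  assumes "x2 \<noteq> 0" "is_bform d p"
  shows "bf_eval d p x1 x2 = x2 ^ d * poly (cpoly p) (x1 / x2)"
proof -
  have "poly (cpoly p) z = (\<Sum>i\<le>d. of_real (coeff p i) * z ^ i)" for z
    using assms(2) unfolding is_bform_def
    by (simp add: poly_altdef coeff_map_poly degree_map_poly)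
      (rule sum.mono_neutral_left, auto simp: coeff_eq_0)
  then have "x2 ^ d * poly (cpoly p) (x1 / x2) =
      (\<Sum>i\<le>d. of_real (coeff p i) * (x2 ^ d * (x1 / x2) ^ i))"
    by (simp add: sum_distrib_left ac_simps)
  also have "\<dots> = (\<Sum>i\<le>d. of_real (coeff p i) * x1 ^ i * x2 ^ (d - i))"
  proof (rule sum.cong)
    fix i assume "i \<in> {..d}"
    then have "x2 ^ d = x2 ^ i * x2 ^ (d - i)" by (simp flip: power_add)
    with assms(1) show "of_real (coeff p i) * (x2 ^ d * (x1 / x2) ^ i) =
        of_real (coeff p i) * x1 ^ i * x2 ^ (d - i)"
      by (simp add: power_divide field_simps)
  qed simp
  finally show ?thesis by (simp add: bf_eval_def)
qed

lemma bf_eval_at_infinity: "bf_eval d p x1 0 = of_real (coeff p d) * x1 ^ d"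
proof -
  have "bf_eval d p x1 0 = (\<Sum>i\<le>d. if i = d then of_real (coeff p d) * x1 ^ d else 0)"
    unfolding bf_eval_def by (rule sum.cong) (auto simp: power_0_left)
  then show ?thesis by simp
qed

lemma bf_roots_subset_iff:
  assumes "is_bform k h" "is_bform n s" "h \<noteq> 0" "coeff s n \<noteq> 0"
  shows "(\<forall>x1 x2. (x1, x2) \<noteq> (0, 0) \<and> bf_eval k h x1 x2 = 0 \<longrightarrow> bf_eval n s x1 x2 = 0)
    \<longleftrightarrow> degree h = k \<and> (\<forall>z. poly (cpoly h) z = 0 \<longrightarrow> poly (cpoly s) z = 0)"
proof
  assume roots: "\<forall>x1 x2. (x1, x2) \<noteq> (0, 0) \<and> bf_eval k h x1 x2 = 0 \<longrightarrow> bf_eval n s x1 x2 = 0"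
  have "degree h = k"
  proof (rule ccontr)
    assume "degree h \<noteq> k"
    with assms(1) have "coeff h k = 0" by (simp add: is_bform_def coeff_eq_0)
    then have "bf_eval n s 1 0 = 0"
      using roots[rule_format, of 1 0] by (simp add: bf_eval_at_infinity)
    with assms(4) show False by (simp add: bf_eval_at_infinity)
  qed
  moreover have "poly (cpoly s) z = 0" if "poly (cpoly h) z = 0" for z
    using roots[rule_format, of z 1] that assms(1,2) by (simp add: bf_eval_dehomogenize)
  ultimately show "degree h = k \<and> (\<forall>z. poly (cpoly h) z = 0 \<longrightarrow> poly (cpoly s) z = 0)"
    by blast
next
  assume deg: "degree h = k \<and> (\<forall>z. poly (cpoly h) z = 0 \<longrightarrow> poly (cpoly s) z = 0)"
  show "\<forall>x1 x2. (x1, x2) \<noteq> (0, 0) \<and> bf_eval k h x1 x2 = 0 \<longrightarrow> bf_eval n s x1 x2 = 0"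
  proof (intro allI impI)
    fix x1 x2 :: complex
    assume x: "(x1, x2) \<noteq> (0, 0) \<and> bf_eval k h x1 x2 = 0"
    show "bf_eval n s x1 x2 = 0"
    proof (cases "x2 = 0")
      case True
      with x deg assms(3) show ?thesis by (auto simp: bf_eval_at_infinity)
    next
      case False
      with x deg assms(1,2) show ?thesis by (simp add: bf_eval_dehomogenize)
    qed
  qed
qed

lemma bf_dvd_iff:
  assumes "p \<noteq> 0"
  shows "bf_dvd e q d p \<longleftrightarrow> q dvd p \<and> degree p + e \<le> d + degree q"
proof
  assume "bf_dvd e q d p"
  then obtain w where w: "e \<le> d" "degree w \<le> d - e" "p = w * q"
    unfolding bf_dvd_def is_bform_def by blast
  with assms have "degree p = degree w + degree q"
    by (simp add: degree_mult_eq)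
  with w show "q dvd p \<and> degree p + e \<le> d + degree q"
    by auto
next
  assume q: "q dvd p \<and> degree p + e \<le> d + degree q"
  then obtain w where w: "p = w * q"
    by (metis dvd_def mult.commute)
  with assms have "degree p = degree w + degree q"
    by (simp add: degree_mult_eq)
  with q w show "bf_dvd e q d p"
    unfolding bf_dvd_def is_bform_def by (intro conjI exI[of _ w]) auto
qed

lemma bf_dvd_0_right: "bf_dvd e q d 0 \<longleftrightarrow> e \<le> d"
  unfolding bf_dvd_def is_bform_def by (auto intro: exI[of _ 0])

lemma bf_dvd_1_left: "is_bform d p \<Longrightarrow> bf_dvd 0 1 d p"
  unfolding bf_dvd_def by auto

lemma bf_dvd_mult:
  assumes "bf_dvd e q d p"
  shows "bf_dvd (e + f) (q * r) (d + f) (p * r)"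
  using assms unfolding bf_dvd_def by (auto simp: ac_simps)

text \<open>The second summand is the multiplicity of the common root \<open>(1:0)\<close>, which the
  polynomial gcd does not see.\<close>

definition bf_gcd_degree :: "nat \<Rightarrow> real poly \<Rightarrow> real poly \<Rightarrow> nat" where
  "bf_gcd_degree d u1 u2 = degree (gcd u1 u2) + (d - max (degree u1) (degree u2))"

lemma bf_common_divisor_bound:
  assumes "is_bform d u1" "is_bform d u2" "u1 \<noteq> 0 \<or> u2 \<noteq> 0"
    and "bf_dvd e q d u1" "bf_dvd e q d u2"
  shows "q dvd gcd u1 u2 \<and> e + max (degree u1) (degree u2) \<le> d + degree q"
proof -
  have "q dvd u1 \<and> (u1 = 0 \<or> degree u1 + e \<le> d + degree q)"
    using assms(4) bf_dvd_iff by (cases "u1 = 0") auto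
  moreover have "q dvd u2 \<and> (u2 = 0 \<or> degree u2 + e \<le> d + degree q)"
    using assms(5) bf_dvd_iff by (cases "u2 = 0") auto
  ultimately show ?thesis
    using assms(3) by auto
qed

lemma bf_is_gcd_gcd:
  assumes "is_bform d u1" "is_bform d u2" "u1 \<noteq> 0 \<or> u2 \<noteq> 0"
  shows "bf_is_gcd d u1 d u2 (bf_gcd_degree d u1 u2) (gcd u1 u2)"
proof -
  let ?G = "gcd u1 u2" and ?D = "max (degree u1) (degree u2)"
  have "?G \<noteq> 0" using assms(3) by auto
  have "?D \<le> d" using assms(1,2) by (simp add: is_bform_def)
  have "u1 \<noteq> 0 \<Longrightarrow> degree ?G \<le> degree u1" "u2 \<noteq> 0 \<Longrightarrow> degree ?G \<le> degree u2"
    by (simp_all add: dvd_imp_degree_le)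
  with assms(3) have "degree ?G \<le> ?D"
    by (meson le_max_iff_disj)
  have "bf_dvd (bf_gcd_degree d u1 u2) ?G d u" if "u = u1 \<or> u = u2" for u
  proof (cases "u = 0")
    case True
    with \<open>?D \<le> d\<close> \<open>degree ?G \<le> ?D\<close> show ?thesis
      by (simp add: bf_dvd_0_right bf_gcd_degree_def)
  next
    case False
    from that have "degree u \<le> ?D" by auto
    with False that \<open>?D \<le> d\<close> show ?thesis
      by (auto simp: bf_dvd_iff bf_gcd_degree_def)
  qed
  moreover have "e \<le> bf_gcd_degree d u1 u2" if "bf_dvd e q d u1" "bf_dvd e q d u2" for e q
  proof -
    have "q dvd ?G" "e + ?D \<le> d + degree q"
      using bf_common_divisor_bound[OF assms that] by auto
    with \<open>?G \<noteq> 0\<close> have "e + ?D \<le> d + degree ?G"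
      using dvd_imp_degree_le[of q ?G] by linarith
    with \<open>?D \<le> d\<close> show ?thesis
      by (simp add: bf_gcd_degree_def)
  qed
  moreover have "is_bform (bf_gcd_degree d u1 u2) ?G"
    by (simp add: is_bform_def bf_gcd_degree_def)
  ultimately show ?thesis
    unfolding bf_is_gcd_def by blast
qed

lemma bf_is_gcdD:
  assumes "is_bform d u1" "is_bform d u2" "u1 \<noteq> 0 \<or> u2 \<noteq> 0"
    and "bf_is_gcd d u1 d u2 e q"
  shows "e = bf_gcd_degree d u1 u2" "\<exists>c. c \<noteq> 0 \<and> gcd u1 u2 = smult c q"
proof -
  let ?G = "gcd u1 u2" and ?D = "max (degree u1) (degree u2)"
  have "bf_is_gcd d u1 d u2 (bf_gcd_degree d u1 u2) ?G"
    using bf_is_gcd_gcd[OF assms(1-3)] .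
  with assms(4) show e: "e = bf_gcd_degree d u1 u2"
    unfolding bf_is_gcd_def by (meson le_antisym)
  have "q dvd ?G \<and> e + ?D \<le> d + degree q"
    using assms(4) bf_common_divisor_bound[OF assms(1-3)] unfolding bf_is_gcd_def by blast
  moreover have "?G \<noteq> 0" "?D \<le> d"
    using assms(1-3) by (auto simp: is_bform_def)
  ultimately have "q dvd ?G" "degree q = degree ?G"
    using e dvd_imp_degree_le[of q ?G] by (auto simp: bf_gcd_degree_def)
  with \<open>?G \<noteq> 0\<close> show "\<exists>c. c \<noteq> 0 \<and> ?G = smult c q"
    using dvd_degree_eq_imp_smult by blast
qed

lemma bf_coprime_iff_coprime:
  assumes "p1 \<noteq> 0" "p2 \<noteq> 0" "degree p1 = n1" "is_bform n2 p2"
  shows "bf_coprime n1 p1 n2 p2 \<longleftrightarrow> coprime p1 p2"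
proof
  assume cop: "bf_coprime n1 p1 n2 p2"
  define r where "r = gcd p1 p2"
  have "bf_dvd (degree r) r n1 p1" "bf_dvd (degree r) r n2 p2"
    using assms r_def by (simp_all add: bf_dvd_iff is_bform_def)
  moreover have "is_bform (degree r) r"
    by (simp add: is_bform_def)
  ultimately have "degree r = 0"
    using cop unfolding bf_coprime_def bf_is_gcd_def by blast
  moreover have "r \<noteq> 0"
    using assms(1) r_def by simp
  ultimately have "is_unit r"
    using is_unit_iff_degree by blast
  then show "coprime p1 p2"
    using r_def is_unit_gcd by blast
next
  assume cop: "coprime p1 p2"
  have "e \<le> 0" if "bf_dvd e q n1 p1" "bf_dvd e q n2 p2" for e q
  proof -
    from that assms(1,2) have "q dvd p1" "q dvd p2" "degree p1 + e \<le> n1 + degree q"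
      by (simp_all add: bf_dvd_iff)
    moreover from cop \<open>q dvd p1\<close> \<open>q dvd p2\<close> have "is_unit q"
      by (rule coprime_common_divisor)
    then have "degree q = 0"
      using is_unit_iff_degree[of q] by fastforce
    ultimately show ?thesis
      using assms(3) by simp
  qed
  moreover have "bf_dvd 0 1 n1 p1" "bf_dvd 0 1 n2 p2"
    using assms(3,4) by (simp_all add: bf_dvd_1_left is_bform_def)
  ultimately show "bf_coprime n1 p1 n2 p2"
    unfolding bf_coprime_def bf_is_gcd_def by (auto simp: is_bform_def)
qed

lemma bf_is_gcd_cofactors_coprime:
  assumes "bf_is_gcd d u1 d u2 e q" "u1 = v1 * q" "u2 = v2 * q"
    "is_bform (d - e) v1" "is_bform (d - e) v2"
  shows "bf_coprime (d - e) v1 (d - e) v2"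
proof -
  have "e \<le> d" "degree q \<le> e"
    using assms(1) unfolding bf_is_gcd_def bf_dvd_def is_bform_def by auto
  have "e' \<le> 0" if "is_bform e' q'" "bf_dvd e' q' (d - e) v1" "bf_dvd e' q' (d - e) v2" for e' q'
  proof -
    have "is_bform (e' + e) (q' * q)"
      using that(1) \<open>degree q \<le> e\<close> degree_mult_le[of q' q] by (simp add: is_bform_def)
    moreover have "bf_dvd (e' + e) (q' * q) d u1" "bf_dvd (e' + e) (q' * q) d u2"
      using bf_dvd_mult[OF that(2), of e q] bf_dvd_mult[OF that(3), of e q] assms(2,3) \<open>e \<le> d\<close>
      by simp_all
    ultimately have "e' + e \<le> e"
      using assms(1) unfolding bf_is_gcd_def by blast
    then show ?thesis by simp
  qed
  with assms(4,5) show ?thesis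
    unfolding bf_coprime_def bf_is_gcd_def by (auto simp: bf_dvd_1_left is_bform_def)
qed

lemma bf_coprime_sum_squares_top_coeff:
  fixes v1 v2 :: "real poly"
  assumes "bf_coprime n v1 n v2" "is_bform n v1" "is_bform n v2" "v1 \<noteq> 0 \<or> v2 \<noteq> 0"
  shows "coeff (v1 ^ 2 + v2 ^ 2) (2 * n) \<noteq> 0"
proof
  assume "coeff (v1 ^ 2 + v2 ^ 2) (2 * n) = 0"
  with assms(2,3) have "coeff v1 n ^ 2 + coeff v2 n ^ 2 = 0"
    by (simp add: coeff_power2_double is_bform_def)
  then have "coeff v1 n = 0" "coeff v2 n = 0"
    by (simp_all add: sum_power2_eq_zero_iff)
  moreover have "v = 0 \<or> degree v < n" if "is_bform n v" "coeff v n = 0" for v :: "real poly"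
    using that unfolding is_bform_def by (metis le_neq_implies_less leading_coeff_0_iff)
  ultimately have small: "v1 = 0 \<or> degree v1 < n" "v2 = 0 \<or> degree v2 < n"
    using assms(2,3) by blast+
  show False
  proof (cases "n = 0")
    case True
    with small assms(4) show False by auto
  next
    case False
    \<comment> \<open>both forms would then be divisible by \<open>x\<^sub>2\<close>\<close>
    with small have "bf_dvd 1 1 n v1" "bf_dvd 1 1 n v2"
      unfolding bf_dvd_def is_bform_def by auto
    moreover have "is_bform 1 1"
      by (simp add: is_bform_def)
    ultimately show False
      using assms(1) unfolding bf_coprime_def bf_is_gcd_def by (meson not_one_le_zero)
  qed
qed

lemma bf_coprime_sum_squares_degree:
  fixes v1 v2 :: "real poly"
  assumes "bf_coprime n v1 n v2" "is_bform n v1" "is_bform n v2" "v1 \<noteq> 0 \<or> v2 \<noteq> 0"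
  shows "degree (v1 ^ 2 + v2 ^ 2) = 2 * n"
  using bf_coprime_sum_squares_top_coeff[OF assms] degree_sum_squares_le[of v1 n v2] assms(2,3)
  by (simp add: is_bform_def le_antisym le_degree)

lemma bf_gcd_cofactors:
  assumes "is_bform d u1" "is_bform d u2" "u1 \<noteq> 0 \<or> u2 \<noteq> 0"
  obtains v1 v2 where "bf_gcd_degree d u1 u2 \<le> d"
    "is_bform (d - bf_gcd_degree d u1 u2) v1" "is_bform (d - bf_gcd_degree d u1 u2) v2"
    "u1 = v1 * gcd u1 u2" "u2 = v2 * gcd u1 u2"
    "bf_coprime (d - bf_gcd_degree d u1 u2) v1 (d - bf_gcd_degree d u1 u2) v2"
proof -
  have gcd: "bf_is_gcd d u1 d u2 (bf_gcd_degree d u1 u2) (gcd u1 u2)"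
    using bf_is_gcd_gcd[OF assms] .
  then obtain v1 v2 where v: "bf_gcd_degree d u1 u2 \<le> d"
    "is_bform (d - bf_gcd_degree d u1 u2) v1" "is_bform (d - bf_gcd_degree d u1 u2) v2"
    "u1 = v1 * gcd u1 u2" "u2 = v2 * gcd u1 u2"
    unfolding bf_is_gcd_def bf_dvd_def by blast
  with bf_is_gcd_cofactors_coprime[OF gcd v(4,5)] show ?thesis
    using that by blast
qed

lemma bf_decomp_exists:
  assumes "is_bform d u1" "is_bform d u2" "u1 \<noteq> 0 \<or> u2 \<noteq> 0"
  shows "\<exists>m k g h v1 v2. bf_decomp d u1 u2 m k g h v1 v2"
proof -
  define G where "G = gcd u1 u2"
  define e where "e = bf_gcd_degree d u1 u2"
  define n where "n = d - e"
  obtain v1 v2 where "e \<le> d" and v: "is_bform n v1" "is_bform n v2" "u1 = v1 * G" "u2 = v2 * G"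
    and cop: "bf_coprime n v1 n v2"
    using bf_gcd_cofactors[OF assms] unfolding G_def e_def n_def by blast
  define s where "s = v1 ^ 2 + v2 ^ 2"
  have "v1 \<noteq> 0 \<or> v2 \<noteq> 0"
    using assms(3) v(3,4) by auto
  then have top: "coeff s (2 * n) \<noteq> 0" and deg_s: "degree s = 2 * n"
    unfolding s_def using bf_coprime_sum_squares_top_coeff bf_coprime_sum_squares_degree cop v(1,2)
    by blast+
  have "G \<noteq> 0"
    using assms(3) G_def by simp
  then obtain g h N where gh: "G = g * h" "coprime g s" "h dvd s ^ N"
    using coprime_split_factor by blast
  with \<open>G \<noteq> 0\<close> have "g \<noteq> 0" "h \<noteq> 0" by auto
  define k where "k = degree h"
  \<comment> \<open>\<open>g\<close> takes the root \<open>(1:0)\<close> of the gcd, which is not a root of \<open>s\<close>\<close>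
  define m where "m = degree g + (d - max (degree u1) (degree u2))"
  have "m + k = e"
    using gh(1) \<open>g \<noteq> 0\<close> \<open>h \<noteq> 0\<close>
    by (simp add: m_def k_def e_def G_def bf_gcd_degree_def degree_mult_eq)
  have "s \<noteq> 0"
    using top by auto
  then have "bf_coprime (2 * n) s m g"
    using bf_coprime_iff_coprime[of s g "2 * n" m] deg_s \<open>g \<noteq> 0\<close> gh(2)
    by (auto simp: m_def is_bform_def coprime_commute)
  moreover have "poly (cpoly s) z = 0" if "poly (cpoly h) z = 0" for z
    using poly_cpoly_dvd_eq_0[OF gh(3) that] by (simp add: cpoly_power)
  then have "\<forall>x1 x2. (x1, x2) \<noteq> (0, 0) \<and> bf_eval k h x1 x2 = 0 \<longrightarrow> bf_eval (2 * n) s x1 x2 = 0"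
    using bf_roots_subset_iff[of k h "2 * n" s] \<open>h \<noteq> 0\<close> top deg_s
    by (simp add: k_def is_bform_def)
  moreover have "is_bform m g" "is_bform k h"
    by (simp_all add: is_bform_def m_def k_def)
  moreover have "bf_is_gcd d u1 d u2 (m + k) (g * h)"
    using bf_is_gcd_gcd[OF assms] \<open>m + k = e\<close> gh(1) by (simp add: e_def G_def)
  ultimately have "bf_decomp d u1 u2 m k g h v1 v2"
    using \<open>m + k = e\<close> \<open>e \<le> d\<close> v cop gh(1)
    unfolding bf_decomp_def s_def n_def by (simp add: ac_simps)
  then show ?thesis by blast
qed

lemma bf_decompD:
  assumes "is_bform d u1" "is_bform d u2" "u1 \<noteq> 0 \<or> u2 \<noteq> 0"
    and "bf_decomp d u1 u2 m k g h v1 v2"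
  shows "m + k = bf_gcd_degree d u1 u2"
    and "\<exists>c. c \<noteq> 0 \<and> gcd u1 u2 = smult c (g * h)"
    and "k = degree h"
    and "coprime (v1 ^ 2 + v2 ^ 2) g"
    and "\<forall>z. poly (cpoly h) z = 0 \<longrightarrow> poly (cpoly (v1 ^ 2 + v2 ^ 2)) z = 0"
proof -
  define n where "n = d - m - k"
  define s where "s = v1 ^ 2 + v2 ^ 2"
  have gcd: "bf_is_gcd d u1 d u2 (m + k) (g * h)"
    and v: "is_bform n v1" "is_bform n v2" "u1 = v1 * g * h" "u2 = v2 * g * h"
    and cop: "bf_coprime n v1 n v2"
    and cop_s: "bf_coprime (2 * n) s m g"
    and roots: "\<forall>x1 x2. (x1, x2) \<noteq> (0, 0) \<and> bf_eval k h x1 x2 = 0 \<longrightarrow> bf_eval (2 * n) s x1 x2 = 0"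
    and "is_bform m g" "is_bform k h"
    using assms(4) unfolding bf_decomp_def n_def s_def by blast+
  show "m + k = bf_gcd_degree d u1 u2" "\<exists>c. c \<noteq> 0 \<and> gcd u1 u2 = smult c (g * h)"
    using bf_is_gcdD[OF assms(1-3) gcd] by blast+
  then have "g \<noteq> 0" "h \<noteq> 0"
    using assms(3) by auto
  have "v1 \<noteq> 0 \<or> v2 \<noteq> 0"
    using assms(3) v(3,4) by auto
  then have top: "coeff s (2 * n) \<noteq> 0" and deg_s: "degree s = 2 * n"
    unfolding s_def using bf_coprime_sum_squares_top_coeff bf_coprime_sum_squares_degree cop v(1,2)
    by blast+
  then have "s \<noteq> 0" by auto
  with cop_s deg_s \<open>g \<noteq> 0\<close> \<open>is_bform m g\<close> show "coprime (v1 ^ 2 + v2 ^ 2) g"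
    using bf_coprime_iff_coprime s_def by blast
  from roots show "k = degree h" "\<forall>z. poly (cpoly h) z = 0 \<longrightarrow> poly (cpoly (v1 ^ 2 + v2 ^ 2)) z = 0"
    using bf_roots_subset_iff[OF \<open>is_bform k h\<close> _ \<open>h \<noteq> 0\<close> top] deg_s
    by (simp_all add: s_def is_bform_def)
qed

lemma bf_decomp_gcd_part_unique:
  assumes "is_bform d u1" "is_bform d u2" "u1 \<noteq> 0 \<or> u2 \<noteq> 0"
    and D: "bf_decomp d u1 u2 m k g h v1 v2" and D': "bf_decomp d u1 u2 m' k' g' h' v1' v2'"
  obtains l where "l \<noteq> 0" "g' * h' = smult l (g * h)"
    "v1' = smult (inverse l) v1" "v2' = smult (inverse l) v2"
proof -
  obtain c c' where "c \<noteq> 0" "c' \<noteq> 0"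
    and gcd: "gcd u1 u2 = smult c (g * h)" "gcd u1 u2 = smult c' (g' * h')"
    using bf_decompD(2)[OF assms(1-3) D] bf_decompD(2)[OF assms(1-3) D'] by blast
  define l where "l = c / c'"
  have "l \<noteq> 0" using \<open>c \<noteq> 0\<close> \<open>c' \<noteq> 0\<close> by (simp add: l_def)
  have "g * h \<noteq> 0"
    using gcd assms(3) by auto
  have "g' * h' = smult (inverse c') (smult c' (g' * h'))"
    using \<open>c' \<noteq> 0\<close> by simp
  also have "\<dots> = smult l (g * h)"
    using gcd by (simp add: l_def divide_inverse mult.commute)
  finally have gh': "g' * h' = smult l (g * h)" .
  have "u1 = v1 * (g * h)" "u2 = v2 * (g * h)" "u1 = v1' * (g' * h')" "u2 = v2' * (g' * h')"
    using D D' unfolding bf_decomp_def by (simp_all add: ac_simps)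
  with gh' have "v1 * (g * h) = smult l v1' * (g * h)" "v2 * (g * h) = smult l v2' * (g * h)"
    by simp_all
  then have "v1 = smult l v1'" "v2 = smult l v2'"
    using mult_right_cancel[OF \<open>g * h \<noteq> 0\<close>] by blast+
  with \<open>l \<noteq> 0\<close> gh' that show ?thesis
    by simp
qed

lemma bf_decomp_unique:
  assumes "is_bform d u1" "is_bform d u2" "u1 \<noteq> 0 \<or> u2 \<noteq> 0"
    and D: "bf_decomp d u1 u2 m k g h v1 v2" and D': "bf_decomp d u1 u2 m' k' g' h' v1' v2'"
  shows "m' = m \<and> k' = k \<and>
    (\<exists>a b c. a \<noteq> 0 \<and> b \<noteq> 0 \<and> c \<noteq> 0 \<and>
       g' = smult a g \<and> h' = smult b h \<and> v1' = smult c v1 \<and> v2' = smult c v2)"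
proof -
  note F = bf_decompD[OF assms(1-3) D] and F' = bf_decompD[OF assms(1-3) D']
  obtain l where "l \<noteq> 0" and gh': "g' * h' = smult l (g * h)"
    and v': "v1' = smult (inverse l) v1" "v2' = smult (inverse l) v2"
    using bf_decomp_gcd_part_unique[OF assms] .
  have "g * h \<noteq> 0" "g' * h' \<noteq> 0"
    using F(2) F'(2) assms(3) by auto
  from v' have "v1' ^ 2 + v2' ^ 2 = smult (inverse l ^ 2) (v1 ^ 2 + v2 ^ 2)"
    by (simp add: smult_power smult_add_right)
  with \<open>l \<noteq> 0\<close> have same_roots:
    "poly (cpoly (v1' ^ 2 + v2' ^ 2)) z = 0 \<longleftrightarrow> poly (cpoly (v1 ^ 2 + v2 ^ 2)) z = 0" for z
    by (simp add: cpoly_smult)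
  have "coprime (v1 ^ 2 + v2 ^ 2) g'"
    using F'(4) same_roots by (simp add: coprime_iff_no_common_complex_root)
  moreover have "h dvd g' * h'"
    by (simp add: gh' dvd_smult)
  ultimately have "h dvd h'"
    using dvd_if_roots_among_coprime F(5) by blast
  have "g * h = smult (inverse l) (g' * h')"
    using gh' \<open>l \<noteq> 0\<close> by simp
  then have "h' dvd g * h"
    by (metis dvd_smult dvd_triv_right)
  moreover have "\<forall>z. poly (cpoly h') z = 0 \<longrightarrow> poly (cpoly (v1 ^ 2 + v2 ^ 2)) z = 0"
    using F'(5) same_roots by blast
  ultimately have "h' dvd h"
    using dvd_if_roots_among_coprime F(4) by blast
  with \<open>h dvd h'\<close> \<open>g' * h' \<noteq> 0\<close> obtain b where "b \<noteq> 0" and h': "h' = smult b h"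
    using dvd_antisym_imp_smult by (metis mult_zero_right)
  with gh' have "smult b g' * h = smult l g * h"
    by simp
  then have "smult b g' = smult l g"
    using mult_right_cancel[of h] \<open>g * h \<noteq> 0\<close> by (metis mult_zero_right)
  then have "g' = smult (l / b) g"
    using \<open>b \<noteq> 0\<close> by (metis smult_smult divide_inverse mult.commute left_inverse smult_1_left)
  moreover have "k' = k" "m' = m"
    using F(1,3) F'(1,3) h' \<open>b \<noteq> 0\<close> by simp_all
  ultimately show ?thesis
    using h' \<open>b \<noteq> 0\<close> \<open>l \<noteq> 0\<close> v'
    by (intro conjI exI[of _ "l / b"] exI[of _ b] exI[of _ "inverse l"]) auto
qed

theorem proposition3p4:
  fixes d :: nat and u1 u2 :: "real poly"
  assumes "is_bform d u1" and "is_bform d u2" and "u1 \<noteq> 0 \<or> u2 \<noteq> 0"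
  shows "(\<exists>m k g h v1 v2. bf_decomp d u1 u2 m k g h v1 v2) \<and>
         (\<forall>m k g h v1 v2 m' k' g' h' v1' v2'.
            bf_decomp d u1 u2 m k g h v1 v2 \<and> bf_decomp d u1 u2 m' k' g' h' v1' v2' \<longrightarrow>
            m' = m \<and> k' = k \<and>
            (\<exists>a b c. a \<noteq> 0 \<and> b \<noteq> 0 \<and> c \<noteq> 0 \<and>
               g' = smult a g \<and> h' = smult b h \<and> v1' = smult c v1 \<and> v2' = smult c v2))"
  using bf_decomp_exists[OF assms] bf_decomp_unique[OF assms] by blast

end
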